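(* Consider the linear regression model $y=X\theta+u$ (context) with fixed $\sigma>0$. Suppose that for a given $i\ge1$ with $i\le k=k(n)$ for all large enough $n$, the tuning parameters satisfy $\xi_{i,n}\eta_{i,n}\to0$ and $n^{1/2}\eta_{i,n}\to\infty$. Let $\hat\theta_i$ denote any one of $\hat\theta_{H,i}$, $\hat\theta_{S,i}$, $\hat\theta_{AS,i}$, and for $d\ge0$ let $D_{i,n}=[\hat\theta_i-\sigma d\xi_{i,n}\eta_{i,n},\hat\theta_i+\sigma d\xi_{i,n}\eta_{i,n}]$. Then $\lim_{n\to\infty}\inf_{\theta\in\mathbb{R}^k}P_{n,\theta,\sigma}(\theta_i\in D_{i,n})$ equals $1$ if $d>1$, equals $1/2$ if $d=1$, and equals $0$ if $d<1$.
   Context: Model: for each sample size $n$, $y=X\theta+u$ with $y\in\mathbb{R}^n$, $X$ a non-stochastic $n\times k$ matrix of rank $k\ge1$ ($k=k(n)$ and all entries may depend on $n$), $\theta\in\mathbb{R}^k$, $u\sim N(0,\sigma^2I_n)$. $P_{n,\theta,\sigma}$ is the probability under $(\theta,\sigma)$ at sample size $n$. $\hat\theta_{LS}=(X'X)^{-1}X'y$. $\xi_{i,n}\ge0$ with $\xi_{i,n}^2=((X'X/n)^{-1})_{ii}$. Standing assumption for asymptotic results: $\sup_n\xi_{i,n}^2/n<\infty$ for every fixed $i$ with $i\le k(n)$ for large $n$. Tuning parameters $\eta_{i,n}>0$. Estimators: $\hat\theta_{H,i}=\hat\theta_{LS,i}\mathbf{1}(|\hat\theta_{LS,i}|>\sigma\xi_{i,n}\eta_{i,n})$;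 $\hat\theta_{S,i}=\operatorname{sgn}(\hat\theta_{LS,i})(|\hat\theta_{LS,i}|-\sigma\xi_{i,n}\eta_{i,n})_+$; $\hat\theta_{AS,i}=\hat\theta_{LS,i}(1-\sigma^2\xi_{i,n}^2\eta_{i,n}^2/\hat\theta_{LS,i}^2)_+$. *)

theory Defs
  imports "HOL-Probability.Probability" "Jordan_Normal_Form.DL_Rank" "Jordan_Normal_Form.Gauss_Jordan_Elimination"
begin

definition ls_est :: "real mat \<Rightarrow> real vec \<Rightarrow> real vec" where
  "ls_est X y = mult_mat_vec (the (mat_inverse (transpose_mat X * X))) (mult_mat_vec (transpose_mat X) y)"

text \<open>xi_{i,n} = sqrt of the i-th diagonal entry of (X'X/n)^{-1} (indices 0-based).\<close>
definition xi :: "real mat \<Rightarrow> nat \<Rightarrow> nat \<Rightarrow> real" where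
  "xi X n i = sqrt (the (mat_inverse ((1 / real n) \<cdot>\<^sub>m (transpose_mat X * X))) $$ (i, i))"

text \<open>Componentwise estimators as functions of the LS coordinate b and the threshold t.\<close>
definition hard_thr :: "real \<Rightarrow> real \<Rightarrow> real" where
  "hard_thr b t = (if \<bar>b\<bar> > t then b else 0)"

definition soft_thr :: "real \<Rightarrow> real \<Rightarrow> real" where
  "soft_thr b t = sgn b * max (\<bar>b\<bar> - t) 0"

definition adapt_soft_thr :: "real \<Rightarrow> real \<Rightarrow> real" where
  "adapt_soft_thr b t = b * max (1 - t\<^sup>2 / b\<^sup>2) 0"

definition noise :: "nat \<Rightarrow> real \<Rightarrow> (nat \<Rightarrow> real) measure" where
  "noise n \<sigma> = PiM {..<n} (\<lambda>_. density lborel (normal_density 0 \<sigma>))"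

definition coverage ::
  "(real \<Rightarrow> real \<Rightarrow> real) \<Rightarrow> real mat \<Rightarrow> nat \<Rightarrow> real \<Rightarrow> real \<Rightarrow> real \<Rightarrow> nat \<Rightarrow> real vec \<Rightarrow> real" where
  "coverage est X n \<sigma> \<eta> d i \<theta> =
     measure (noise n \<sigma>)
       {u \<in> space (noise n \<sigma>).
          let y = mult_mat_vec X \<theta> + Matrix.vec n u;
              b = vec_index (ls_est X y) i;
              t = \<sigma> * xi X n i * \<eta>;
              e = est b t
          in e - \<sigma> * d * xi X n i * \<eta> \<le> vec_index \<theta> i \<and> vec_index \<theta> i \<le> e + \<sigma> * d * xi X n i * \<eta>}"

end

theory Submission
  imports Defs
begin

text \<open>Write the least-squares coordinate as \<open>\<theta>_i + s Z\<close> with \<open>Z\<close> standard normal and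
  \<open>s = \<sigma> sqrt ((X'X)\<^sup>-\<^sup>1)_ii\<close>. Then the coverage probability depends on \<open>\<theta>\<close> only through
  \<open>x = \<theta>_i\<close>, and the threshold is \<open>t = s r\<close> with \<open>r = sqrt n \<eta>\<close>. Each of the three estimators
  moves \<open>b\<close> by at most \<open>t\<close>, towards zero, and is positive only if \<open>b > t\<close>. Hence for \<open>d > 1\<close>
  the interval covers whenever \<open>|Z| \<le> (d - 1) r\<close>, and for \<open>d \<ge> 1\<close> it covers whenever \<open>Z\<close> lies
  in \<open>(0, r]\<close> or in \<open>(-r, 0]\<close> (whichever moves \<open>b\<close> away from zero), an event of probability
  tending to \<open>1/2\<close>. Conversely, at \<open>x = t - s y\<close> with \<open>y < (1 - d) r\<close> the interval can only
  cover \<open>x\<close> if the estimator is positive, hence only if \<open>Z > y\<close>. Letting \<open>r \<rightarrow> \<infinity>\<close> gives the three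
  limits.\<close>

lemma index_mult_mat_sum:
  fixes C D :: "real mat"
  assumes "C \<in> carrier_mat k n" "D \<in> carrier_mat n m" "i < k" "j < m"
  shows "(C * D) $$ (i, j) = (\<Sum>l<n. C $$ (i, l) * D $$ (l, j))"
  using assms by (auto simp: scalar_prod_def atLeast0LessThan intro!: sum.cong)

lemma index_mult_mat_vec_sum:
  fixes C :: "real mat"
  assumes "C \<in> carrier_mat k n" "i < k"
  shows "(C *\<^sub>v Matrix.vec n u) $ i = (\<Sum>l<n. C $$ (i, l) * u l)"
  using assms by (auto simp: scalar_prod_def atLeast0LessThan intro!: sum.cong)

lemma full_column_rank_mult_vec_eq_0:
  fixes X :: "real mat"
  assumes X: "X \<in> carrier_mat n k" and rank: "vec_space.rank n X = k"
    and v: "v \<in> carrier_vec k" and Xv: "X *\<^sub>v v = 0\<^sub>v n"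
  shows "v = 0\<^sub>v k"
proof -
  interpret vec_space "TYPE(real)" n .
  have "distinct (cols X)"
  proof (rule ccontr)
    assume "\<not> distinct (cols X)"
    then have "card (set (cols X)) < k"
      using X card_distinct cols_length card_length carrier_matD(2) nat_less_le by metis
    obtain S where S: "maximal S (\<lambda>T. T \<subseteq> set (cols X) \<and> lin_indpt T)"
      using maximal_exists[of "\<lambda>T. T \<subseteq> set (cols X) \<and> lin_indpt T" "card (set (cols X))" "{}"]
      by (meson List.finite_set card_mono empty_iff empty_subsetI finite_lin_indpt2 rev_finite_subset)
    then have "card S \<le> card (set (cols X))" by (simp add: card_mono maximal_def)
    with \<open>card (set (cols X)) < k\<close> show False using rank_card_indpt[OF X S] rank by simp
  qed
  then show ?thesis
    using full_rank_lin_indpt[OF X rank] lin_depI[OF X v _ Xv] by blast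
qed

lemma gram_det_nonzero:
  fixes X :: "real mat"
  assumes X: "X \<in> carrier_mat n k" and rank: "vec_space.rank n X = k"
  shows "det (transpose_mat X * X) \<noteq> 0"
proof
  assume "det (transpose_mat X * X) = 0"
  then obtain v where v: "v \<in> carrier_vec k" "v \<noteq> 0\<^sub>v k" "(transpose_mat X * X) *\<^sub>v v = 0\<^sub>v k"
    using det_0_iff_vec_prod_zero_field[of "transpose_mat X * X" k] X by auto
  have Xv: "X *\<^sub>v v \<in> carrier_vec n" using X v by auto
  have "(X *\<^sub>v v) \<bullet> (X *\<^sub>v v) = (transpose_mat X *\<^sub>v (X *\<^sub>v v)) \<bullet> v"
    by (rule transpose_vec_mult_scalar[OF X v(1) Xv, symmetric])
  also have "\<dots> = 0" using v X by (simp flip: assoc_mult_mat_vec)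
  finally have "X *\<^sub>v v = 0\<^sub>v n"
    using conjugate_square_eq_0_vec[OF Xv] by (simp add: scalar_prod_def)
  then show False using full_column_rank_mult_vec_eq_0[OF X rank v(1)] v(2) by blast
qed

lemma mat_inverse_if_det_nonzero:
  fixes G :: "real mat"
  assumes G: "G \<in> carrier_mat k k" and det: "det G \<noteq> 0"
  obtains A where "mat_inverse G = Some A" "A \<in> carrier_mat k k" "G * A = 1\<^sub>m k" "A * G = 1\<^sub>m k"
proof -
  have "G \<in> Units (ring_mat TYPE(real) k ())"
    using det_non_zero_imp_unit[OF G det] .
  then obtain A where "mat_inverse G = Some A"
    using mat_inverse(1)[OF G, where b = "()"] by (cases "mat_inverse G") auto
  with mat_inverse(2)[OF G this] that show ?thesis by blast
qed

lemma xi_eq_sqrt_gram_inverse: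
  fixes X :: "real mat"
  assumes X: "X \<in> carrier_mat n k" and rank: "vec_space.rank n X = k" and n: "n > 0"
    and A: "mat_inverse (transpose_mat X * X) = Some A" and i: "i < k"
  shows "xi X n i = sqrt (real n * A $$ (i, i))"
proof -
  let ?G = "transpose_mat X * X"
  have G: "?G \<in> carrier_mat k k" using X by auto
  from mat_inverse(2)[OF G A] have Ac: "A \<in> carrier_mat k k" and GA: "?G * A = 1\<^sub>m k" by auto
  have H: "(1 / real n) \<cdot>\<^sub>m ?G \<in> carrier_mat k k" using G by auto
  have "det ((1 / real n) \<cdot>\<^sub>m ?G) \<noteq> 0"
    using gram_det_nonzero[OF X rank] n G by (simp add: det_smult)
  then obtain B where B: "mat_inverse ((1 / real n) \<cdot>\<^sub>m ?G) = Some B"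
    and Bc: "B \<in> carrier_mat k k" and BH: "B * ((1 / real n) \<cdot>\<^sub>m ?G) = 1\<^sub>m k"
    using mat_inverse_if_det_nonzero[OF H] by blast
  have "(1 / real n) \<cdot>\<^sub>m ?G * (real n \<cdot>\<^sub>m A) = (1 / real n) \<cdot>\<^sub>m (?G * (real n \<cdot>\<^sub>m A))"
    using G Ac by (intro mult_smult_assoc_mat) auto
  also have "\<dots> = (1 / real n) \<cdot>\<^sub>m (real n \<cdot>\<^sub>m (?G * A))"
    using G Ac by (subst mult_smult_distrib) auto
  also have "\<dots> = 1\<^sub>m k" using GA n by (intro eq_matI) auto
  finally have "(1 / real n) \<cdot>\<^sub>m ?G * (real n \<cdot>\<^sub>m A) = 1\<^sub>m k" .
  then have "B = B * ((1 / real n) \<cdot>\<^sub>m ?G * (real n \<cdot>\<^sub>m A))" using Bc by simp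
  also have "\<dots> = real n \<cdot>\<^sub>m A"
    using Bc H Ac BH by (simp add: assoc_mult_mat[symmetric, OF Bc H smult_carrier_mat[OF Ac]])
  finally have "B = real n \<cdot>\<^sub>m A" .
  then show ?thesis unfolding xi_def using B Ac i by simp
qed

lemma ls_est_index:
  fixes X :: "real mat"
  assumes X: "X \<in> carrier_mat n k" and A: "mat_inverse (transpose_mat X * X) = Some A"
    and \<theta>: "\<theta> \<in> carrier_vec k" and i: "i < k"
  shows "ls_est X (X *\<^sub>v \<theta> + Matrix.vec n u) $ i = \<theta> $ i + (\<Sum>l<n. (A * transpose_mat X) $$ (i, l) * u l)"
proof -
  have Xt: "transpose_mat X \<in> carrier_mat k n" using X by auto
  from mat_inverse(2)[OF _ A] X have Ac: "A \<in> carrier_mat k k" and AG: "A * (transpose_mat X * X) = 1\<^sub>m k"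
    by auto
  have "ls_est X (X *\<^sub>v \<theta> + Matrix.vec n u)
      = A *\<^sub>v (transpose_mat X *\<^sub>v (X *\<^sub>v \<theta>)) + A *\<^sub>v (transpose_mat X *\<^sub>v Matrix.vec n u)"
    unfolding ls_est_def using A Xt Ac X \<theta> by (simp add: mult_add_distrib_mat_vec)
  also have "A *\<^sub>v (transpose_mat X *\<^sub>v (X *\<^sub>v \<theta>)) = (A * (transpose_mat X * X)) *\<^sub>v \<theta>"
    using assoc_mult_mat_vec[OF Ac _ \<theta>, of "transpose_mat X * X"] assoc_mult_mat_vec[OF Xt X \<theta>] X by simp
  also have "\<dots> = \<theta>" using AG \<theta> by simp
  also have "A *\<^sub>v (transpose_mat X *\<^sub>v Matrix.vec n u) = (A * transpose_mat X) *\<^sub>v Matrix.vec n u"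
    using Ac Xt by simp
  finally have "ls_est X (X *\<^sub>v \<theta> + Matrix.vec n u) = \<theta> + (A * transpose_mat X) *\<^sub>v Matrix.vec n u" .
  moreover have C: "A * transpose_mat X \<in> carrier_mat k n" using Ac Xt by auto
  then have "(\<theta> + (A * transpose_mat X) *\<^sub>v Matrix.vec n u) $ i
      = \<theta> $ i + ((A * transpose_mat X) *\<^sub>v Matrix.vec n u) $ i"
    using i by (subst index_add_vec(1)) auto
  ultimately show ?thesis using index_mult_mat_vec_sum[OF C i] by simp
qed

lemma ls_weights:
  fixes X :: "real mat"
  assumes X: "X \<in> carrier_mat n k" and A: "mat_inverse (transpose_mat X * X) = Some A" and i: "i < k"
  shows sum_sq_ls_weights: "(\<Sum>l<n. ((A * transpose_mat X) $$ (i, l))\<^sup>2) = A $$ (i, i)"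
    and ls_weights_nonzero: "\<exists>l<n. (A * transpose_mat X) $$ (i, l) \<noteq> 0"
proof -
  let ?C = "A * transpose_mat X"
  have Xt: "transpose_mat X \<in> carrier_mat k n" using X by auto
  from mat_inverse(2)[OF _ A] X have Ac: "A \<in> carrier_mat k k" and AG: "A * (transpose_mat X * X) = 1\<^sub>m k"
    by auto
  have C: "?C \<in> carrier_mat k n" using Ac Xt by auto
  have CX: "?C * X = 1\<^sub>m k" using AG Ac X Xt by (simp add: assoc_mult_mat)
  have "?C * transpose_mat ?C = ?C * (X * transpose_mat A)"
    using Ac X by (simp add: transpose_mult)
  also have "\<dots> = (?C * X) * transpose_mat A"
    using C X Ac by (intro assoc_mult_mat[symmetric]) auto
  finally have "?C * transpose_mat ?C = (?C * X) * transpose_mat A" .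
  then have "?C * transpose_mat ?C = transpose_mat A" using CX Ac by simp
  then show "(\<Sum>l<n. (?C $$ (i, l))\<^sup>2) = A $$ (i, i)"
    using index_mult_mat_sum[OF C _ i i, of "transpose_mat ?C"] C Ac i by (auto simp: power2_eq_square intro!: sum.cong)
  show "\<exists>l<n. ?C $$ (i, l) \<noteq> 0"
  proof (rule ccontr)
    assume "\<not> (\<exists>l<n. ?C $$ (i, l) \<noteq> 0)"
    then have "(?C * X) $$ (i, i) = 0" using index_mult_mat_sum[OF C X i i] by simp
    then show False using CX i by simp
  qed
qed

lemma prob_space_noise: "\<sigma> > 0 \<Longrightarrow> prob_space (noise n \<sigma>)"
  unfolding noise_def by (intro prob_space_PiM prob_space_normal_density)

lemma distributed_noise_component:
  assumes \<sigma>: "\<sigma> > 0" and j: "j < n"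
  shows "distributed (noise n \<sigma>) lborel (\<lambda>u. u j) (normal_density 0 \<sigma>)"
proof -
  let ?N = "density lborel (normal_density 0 \<sigma>)"
  have m: "(\<lambda>u. u j) \<in> measurable (noise n \<sigma>) ?N"
    unfolding noise_def by (rule measurable_component_singleton) (use j in auto)
  have "distr (noise n \<sigma>) lborel (\<lambda>u. u j) = distr (noise n \<sigma>) ?N (\<lambda>u. u j)"
    by (rule distr_cong) auto
  also have "\<dots> = ?N" unfolding noise_def
    by (rule distr_PiM_component) (use j \<sigma> prob_space_normal_density in auto)
  finally show ?thesis unfolding distributed_def using m measurable_cong_sets[OF refl, of ?N lborel]
    by simp
qed

lemma indep_vars_noise_components:
  assumes \<sigma>: "\<sigma> > 0" and n: "n > 0"
  shows "prob_space.indep_vars (noise n \<sigma>) (\<lambda>_. borel) (\<lambda>j u. u j) {..<n}"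
proof -
  let ?N = "density lborel (normal_density 0 \<sigma>)"
  let ?M = "noise n \<sigma>"
  interpret M: prob_space ?M using prob_space_noise[OF \<sigma>] .
  have M: "?M = PiM {..<n} (\<lambda>_. ?N)" by (simp add: noise_def)
  show ?thesis
  proof (subst M.indep_vars_iff_distr_eq_PiM')
    show "{..<n} \<noteq> {}" using n by auto
    show "(\<lambda>u. u j) \<in> measurable ?M borel" if "j \<in> {..<n}" for j
      using distributed_noise_component[OF \<sigma>, of j n] that by (auto simp: distributed_def)
    have "distr ?M (PiM {..<n} (\<lambda>_. borel)) (\<lambda>x. restrict x {..<n}) = distr ?M ?M (\<lambda>x. x)"
    proof (rule distr_cong)
      show "sets (PiM {..<n} (\<lambda>_. borel)) = sets ?M" unfolding M
        by (rule sets_PiM_cong) auto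
      show "restrict x {..<n} = x" if "x \<in> space ?M" for x
        using that unfolding M by (auto simp: space_PiM PiE_def extensional_restrict)
    qed simp
    also have "\<dots> = PiM {..<n} (\<lambda>j. distr ?M borel (\<lambda>u. u j))"
    proof -
      have "distr ?M borel (\<lambda>u. u j) = ?N" if "j < n" for j
        using distributed_noise_component[OF \<sigma> that] unfolding distributed_def
        by (metis (no_types) distr_cong sets_lborel)
      then have "PiM {..<n} (\<lambda>j. distr ?M borel (\<lambda>u. u j)) = ?M"
        unfolding M by (intro PiM_cong) auto
      then show ?thesis by simp
    qed
    finally show "distr ?M (PiM {..<n} (\<lambda>_. borel)) (\<lambda>x. restrict x {..<n}) =
        PiM {..<n} (\<lambda>j. distr ?M borel (\<lambda>u. u j))" .
  qed
qed

lemma distributed_noise_lincomb: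
  assumes \<sigma>: "\<sigma> > 0" and c: "\<exists>j<n. c j \<noteq> 0"
  shows "distributed (noise n \<sigma>) lborel (\<lambda>u. \<Sum>j<n. c j * u j)
           (normal_density 0 (\<sigma> * sqrt (\<Sum>j<n. (c j)\<^sup>2)))"
proof -
  interpret M: prob_space "noise n \<sigma>" using prob_space_noise[OF \<sigma>] .
  define J where "J = {j. j < n \<and> c j \<noteq> 0}"
  have J: "finite J" "J \<noteq> {}" "J \<subseteq> {..<n}" using c by (auto simp: J_def)
  have "n > 0" using c by auto
  have "M.indep_vars (\<lambda>_. borel) (\<lambda>j u. c j * u j) J"
    by (rule M.indep_vars_compose2[OF M.indep_vars_subset[OF indep_vars_noise_components[OF \<sigma> \<open>n > 0\<close>] J(3)]])
      auto
  moreover have "distributed (noise n \<sigma>) lborel (\<lambda>u. c j * u j) (normal_density 0 (\<bar>c j\<bar> * \<sigma>))"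
    if "j \<in> J" for j
    using M.normal_density_affine[OF distributed_noise_component[OF \<sigma>, of j n] \<sigma>, of "c j" 0] that
    by (simp add: J_def)
  ultimately have "distributed (noise n \<sigma>) lborel (\<lambda>u. \<Sum>j\<in>J. c j * u j)
      (normal_density (\<Sum>j\<in>J. 0) (sqrt (\<Sum>j\<in>J. (\<bar>c j\<bar> * \<sigma>)\<^sup>2)))"
    using \<sigma> by (intro M.sum_indep_normal[OF J(1,2)]) (auto simp: J_def)
  moreover have "(\<Sum>j\<in>J. c j * u j) = (\<Sum>j<n. c j * u j)" for u
    by (rule sum.mono_neutral_left) (auto simp: J_def)
  moreover have "(\<Sum>j\<in>J. (\<bar>c j\<bar> * \<sigma>)\<^sup>2) = \<sigma>\<^sup>2 * (\<Sum>j<n. (c j)\<^sup>2)"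
    by (subst sum.mono_neutral_left[of "{..<n}"])
      (auto simp: J_def sum_distrib_left power_mult_distrib mult.commute)
  ultimately show ?thesis using \<sigma> by (simp add: real_sqrt_mult)
qed

abbreviation std_normal :: "real measure" where
  "std_normal \<equiv> density lborel std_normal_density"

definition Phi :: "real \<Rightarrow> real" where
  "Phi = cdf std_normal"

interpretation std_normal: real_distribution std_normal
  by (simp add: real_distribution_def real_distribution_axioms_def prob_space_normal_density)

lemma Phi_at_top: "(Phi \<longlongrightarrow> 1) at_top"
  unfolding Phi_def by (rule std_normal.cdf_lim_at_top_prob)

lemma Phi_at_bot: "(Phi \<longlongrightarrow> 0) at_bot"
  unfolding Phi_def by (rule std_normal.cdf_lim_at_bot)

lemma measure_std_normal_singleton: "measure std_normal {a} = 0"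
proof -
  have "AE x in lborel. x \<in> {a} \<longrightarrow> std_normal_density x = 0"
    using AE_lborel_singleton[of a] by eventually_elim auto
  then have "{a} \<in> null_sets std_normal"
    by (subst null_sets_density_iff) auto
  then show ?thesis by (simp add: measure_def null_setsD1)
qed

lemma isCont_Phi: "isCont Phi x"
  unfolding Phi_def using std_normal.isCont_cdf measure_std_normal_singleton by blast

lemma measure_std_normal_Ioc: "a < b \<Longrightarrow> measure std_normal {a<..b} = Phi b - Phi a"
  unfolding Phi_def using std_normal.cdf_diff_eq by simp

lemma measure_std_normal_Ioi: "measure std_normal {a<..} = 1 - Phi a"
  using std_normal.prob_compl[of "{..a}"] by (simp add: Phi_def cdf_def Compl_eq_Diff_UNIV[symmetric])

lemma Phi_0: "Phi 0 = 1 / 2"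
proof -
  have "distributed std_normal lborel (\<lambda>x. x) std_normal_density"
    unfolding distributed_def by (auto simp: distr_id2)
  then have "distributed std_normal lborel (\<lambda>x. 0 + (-1) * x) (normal_density (0 + (-1) * 0) (\<bar>-1\<bar> * 1))"
    by (rule std_normal.normal_density_affine) auto
  then have "distr std_normal lborel uminus = std_normal"
    unfolding distributed_def by (simp add: fun_eq_iff)
  then have "measure std_normal {..0} = measure (distr std_normal lborel uminus) {..0}" by simp
  also have "\<dots> = measure std_normal (uminus -` {..0} \<inter> space std_normal)"
    by (rule measure_distr) auto
  also have "uminus -` {..0} \<inter> space std_normal = {0} \<union> {0<..}" by auto
  also have "measure std_normal \<dots> = 1 - Phi 0"
    using std_normal.finite_measure_Union[of "{0}" "{0<..}"]
    by (simp add: measure_std_normal_singleton measure_std_normal_Ioi)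
  finally show ?thesis by (simp add: Phi_def cdf_def)
qed

definition thresholding_rule :: "(real \<Rightarrow> real \<Rightarrow> real) \<Rightarrow> bool" where
  "thresholding_rule est \<longleftrightarrow>
     (\<forall>t. (\<lambda>b. est b t) \<in> borel_measurable borel) \<and>
     (\<forall>b t. t > 0 \<longrightarrow> \<bar>est b t - b\<bar> \<le> t \<and> (0 \<le> b \<longrightarrow> est b t \<le> b) \<and> (b \<le> 0 \<longrightarrow> b \<le> est b t)
       \<and> (0 < est b t \<longrightarrow> t < b))"

lemma thresholding_ruleD:
  assumes "thresholding_rule est"
  shows "(\<lambda>b. est b t) \<in> borel_measurable borel"
    and "t > 0 \<Longrightarrow> \<bar>est b t - b\<bar> \<le> t"
    and "t > 0 \<Longrightarrow> 0 \<le> b \<Longrightarrow> est b t \<le> b"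
    and "t > 0 \<Longrightarrow> b \<le> 0 \<Longrightarrow> b \<le> est b t"
    and "t > 0 \<Longrightarrow> 0 < est b t \<Longrightarrow> t < b"
  using assms unfolding thresholding_rule_def by blast+

lemma thresholding_rule_hard_thr: "thresholding_rule hard_thr"
  unfolding thresholding_rule_def hard_thr_def by auto

lemma thresholding_rule_soft_thr: "thresholding_rule soft_thr"
  unfolding thresholding_rule_def soft_thr_def by (auto simp: sgn_if)

lemma adapt_soft_thr_above:
  assumes t: "0 < t" and b: "t < \<bar>b\<bar>"
  shows "adapt_soft_thr b t = b * (1 - t\<^sup>2 / b\<^sup>2)" and "0 < t\<^sup>2 / b\<^sup>2" and "t\<^sup>2 / b\<^sup>2 < 1"
proof -
  have "t\<^sup>2 < \<bar>b\<bar>\<^sup>2" using t b by (intro power_strict_mono) auto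
  then have tb: "t\<^sup>2 < b\<^sup>2" by simp
  moreover have "0 < t\<^sup>2" using t by simp
  ultimately have "0 < b\<^sup>2" by linarith
  with tb \<open>0 < t\<^sup>2\<close> show "t\<^sup>2 / b\<^sup>2 < 1" and "0 < t\<^sup>2 / b\<^sup>2" by simp_all
  then show "adapt_soft_thr b t = b * (1 - t\<^sup>2 / b\<^sup>2)"
    unfolding adapt_soft_thr_def by simp
qed

lemma adapt_soft_thr_below:
  assumes "\<bar>b\<bar> \<le> t"
  shows "adapt_soft_thr b t = 0"
proof (cases "b = 0")
  case False
  have "\<bar>b\<bar>\<^sup>2 \<le> t\<^sup>2" using assms by (intro power_mono) auto
  then show ?thesis using False by (simp add: adapt_soft_thr_def)
qed (simp add: adapt_soft_thr_def)

lemma thresholding_rule_adapt_soft_thr: "thresholding_rule adapt_soft_thr"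
proof -
  have "(\<lambda>b. adapt_soft_thr b t) \<in> borel_measurable borel" for t
    unfolding adapt_soft_thr_def by measurable
  moreover have "\<bar>adapt_soft_thr b t - b\<bar> \<le> t \<and> (0 \<le> b \<longrightarrow> adapt_soft_thr b t \<le> b)
      \<and> (b \<le> 0 \<longrightarrow> b \<le> adapt_soft_thr b t) \<and> (0 < adapt_soft_thr b t \<longrightarrow> t < b)"
    if t: "t > 0" for b t
  proof (cases "\<bar>b\<bar> > t")
    case True
    define q where "q = t\<^sup>2 / b\<^sup>2"
    have est: "adapt_soft_thr b t = b * (1 - q)" and q: "0 < q" "q < 1"
      using adapt_soft_thr_above[OF t True] by (simp_all add: q_def)
    have "\<bar>b\<bar> * q = t * (t / \<bar>b\<bar>)" using True t by (simp add: q_def power2_eq_square field_simps)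
    also have "\<dots> \<le> t" using True t by (intro mult_left_le) auto
    finally have "\<bar>adapt_soft_thr b t - b\<bar> \<le> t" using q by (simp add: est algebra_simps abs_mult)
    moreover have "0 < adapt_soft_thr b t \<longleftrightarrow> 0 < b" using q by (simp add: est zero_less_mult_iff)
    ultimately show ?thesis using True q by (auto simp: est algebra_simps mult_le_0_iff)
  qed (use t adapt_soft_thr_below in auto)
  ultimately show ?thesis unfolding thresholding_rule_def by blast
qed

definition thr_coverage :: "(real \<Rightarrow> real \<Rightarrow> real) \<Rightarrow> real \<Rightarrow> real \<Rightarrow> real \<Rightarrow> real \<Rightarrow> real" where
  "thr_coverage est s t d x =
     measure std_normal {z. est (x + s * z) t - d * t \<le> x \<and> x \<le> est (x + s * z) t + d * t}"

definition min_coverage :: "(real \<Rightarrow> real \<Rightarrow> real) \<Rightarrow> real \<Rightarrow> real \<Rightarrow> real \<Rightarrow> real" where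
  "min_coverage est s r d = (INF x. thr_coverage est s (s * r) d x)"

lemma thr_coverage_event_borel:
  assumes "thresholding_rule est"
  shows "{z. est (x + s * z) t - d * t \<le> x \<and> x \<le> est (x + s * z) t + d * t} \<in> sets borel"
proof -
  have "(\<lambda>z. est (x + s * z) t) \<in> borel_measurable borel"
    using measurable_compose[OF _ thresholding_ruleD(1)[OF assms], of "\<lambda>z. x + s * z"] by simp
  then show ?thesis by simp
qed

lemma thr_coverage_ge_measure:
  assumes "thresholding_rule est" and "A \<in> sets borel"
    and "\<And>z. z \<in> A \<Longrightarrow> est (x + s * z) t - d * t \<le> x \<and> x \<le> est (x + s * z) t + d * t"
  shows "measure std_normal A \<le> thr_coverage est s t d x"
  unfolding thr_coverage_def
  by (rule std_normal.finite_measure_mono) (use assms thr_coverage_event_borel in auto)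

lemma thr_coverage_le_1: "thr_coverage est s t d x \<le> 1"
  unfolding thr_coverage_def by (rule std_normal.prob_le_1)

lemma bdd_below_thr_coverage: "bdd_below (range (thr_coverage est s t d))"
  unfolding thr_coverage_def by (rule bdd_belowI[of _ 0]) auto

lemma thr_coverage_ge_two_sided:
  assumes est: "thresholding_rule est" and s: "s > 0" and r: "r > 0" and d: "1 < d"
  shows "Phi ((d - 1) * r) - Phi (- ((d - 1) * r)) \<le> thr_coverage est s (s * r) d x"
proof -
  have "Phi ((d - 1) * r) - Phi (- ((d - 1) * r)) = measure std_normal {- ((d - 1) * r)<..(d - 1) * r}"
    using r d by (simp add: measure_std_normal_Ioc)
  also have "\<dots> \<le> thr_coverage est s (s * r) d x"
  proof (rule thr_coverage_ge_measure[OF est])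
    fix z assume z: "z \<in> {- ((d - 1) * r)<..(d - 1) * r}"
    have "\<bar>z\<bar> \<le> (d - 1) * r" using z by auto
    then have "\<bar>s * z\<bar> \<le> (d - 1) * (s * r)"
      using s mult_left_mono[of "\<bar>z\<bar>" "(d - 1) * r" s] by (simp add: abs_mult algebra_simps)
    moreover have "\<bar>est (x + s * z) (s * r) - (x + s * z)\<bar> \<le> s * r"
      using thresholding_ruleD(2)[OF est] s r by simp
    ultimately show "est (x + s * z) (s * r) - d * (s * r) \<le> x \<and> x \<le> est (x + s * z) (s * r) + d * (s * r)"
      by (auto simp: algebra_simps abs_le_iff)
  qed simp
  finally show ?thesis .
qed

lemma thr_coverage_ge_one_sided:
  assumes est: "thresholding_rule est" and s: "s > 0" and r: "r > 0" and d: "1 \<le> d"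
  shows "min (Phi r - Phi 0) (Phi 0 - Phi (- r)) \<le> thr_coverage est s (s * r) d x"
proof -
  let ?t = "s * r"
  have t: "?t > 0" using s r by simp
  have dt: "?t \<le> d * ?t" using mult_right_mono[OF d, of ?t] t by simp
  have close: "\<bar>est b ?t - b\<bar> \<le> ?t" for b using thresholding_ruleD(2)[OF est t] .
  show ?thesis
  proof (cases "x \<ge> 0")
    case True
    have "Phi r - Phi 0 = measure std_normal {0<..r}" using r by (simp add: measure_std_normal_Ioc)
    also have "\<dots> \<le> thr_coverage est s ?t d x"
    proof (rule thr_coverage_ge_measure[OF est])
      fix z assume z: "z \<in> {0<..r}"
      have "x \<le> x + s * z" "x + s * z \<le> x + ?t" using z s by (auto intro: mult_left_mono)
      moreover have "est (x + s * z) ?t \<le> x + s * z" using thresholding_ruleD(3)[OF est t] True z s by simp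
      ultimately show "est (x + s * z) ?t - d * ?t \<le> x \<and> x \<le> est (x + s * z) ?t + d * ?t"
        using close[of "x + s * z"] dt by (auto simp: abs_le_iff)
    qed simp
    finally show ?thesis by simp
  next
    case False
    have "Phi 0 - Phi (- r) = measure std_normal {- r<..0}" using r by (simp add: measure_std_normal_Ioc)
    also have "\<dots> \<le> thr_coverage est s ?t d x"
    proof (rule thr_coverage_ge_measure[OF est])
      fix z assume z: "z \<in> {- r<..0}"
      have "s * z \<le> 0" using z s by (simp add: mult_nonneg_nonpos)
      moreover have "s * (- r) \<le> s * z" using z s by (intro mult_left_mono) auto
      ultimately have "x - ?t \<le> x + s * z" "x + s * z \<le> x" by auto
      moreover have "x + s * z \<le> est (x + s * z) ?t" using thresholding_ruleD(4)[OF est t] False \<open>s * z \<le> 0\<close> by simp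
      ultimately show "est (x + s * z) ?t - d * ?t \<le> x \<and> x \<le> est (x + s * z) ?t + d * ?t"
        using close[of "x + s * z"] dt by (auto simp: abs_le_iff)
    qed simp
    finally show ?thesis by simp
  qed
qed

lemma thr_coverage_le:
  assumes est: "thresholding_rule est" and s: "s > 0" and r: "r > 0" and y: "y < (1 - d) * r"
  shows "thr_coverage est s (s * r) d (s * r - s * y) \<le> 1 - Phi y"
proof -
  let ?t = "s * r" and ?x = "s * r - s * y"
  have "s * y < s * ((1 - d) * r)" using y s by simp
  then have pos: "?x - d * ?t > 0" by (simp add: algebra_simps)
  have "{z. est (?x + s * z) ?t - d * ?t \<le> ?x \<and> ?x \<le> est (?x + s * z) ?t + d * ?t} \<subseteq> {y<..}"
  proof
    fix z assume "z \<in> {z. est (?x + s * z) ?t - d * ?t \<le> ?x \<and> ?x \<le> est (?x + s * z) ?t + d * ?t}"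
    then have "est (?x + s * z) ?t > 0" using pos by simp
    then have "?x + s * z > ?t" using thresholding_ruleD(5)[OF est] s r by simp
    then show "z \<in> {y<..}" using s by simp
  qed
  then have "thr_coverage est s ?t d ?x \<le> measure std_normal {y<..}"
    unfolding thr_coverage_def by (intro std_normal.finite_measure_mono) auto
  then show ?thesis by (simp add: measure_std_normal_Ioi)
qed

lemma coverage_eq_thr_coverage:
  fixes X :: "real mat"
  assumes X: "X \<in> carrier_mat n k" and rank: "vec_space.rank n X = k" and i: "i < k" and n: "n > 0"
    and \<sigma>: "\<sigma> > 0" and est: "thresholding_rule est"
  obtains s where "s > 0"
    "\<And>\<theta>. \<theta> \<in> carrier_vec k \<Longrightarrow>
       coverage est X n \<sigma> \<eta> d i \<theta> = thr_coverage est s (s * (sqrt (real n) * \<eta>)) d (\<theta> $ i)"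
proof -
  have "transpose_mat X * X \<in> carrier_mat k k" using X by auto
  then obtain A where A: "mat_inverse (transpose_mat X * X) = Some A"
    using mat_inverse_if_det_nonzero gram_det_nonzero[OF X rank] by blast
  define c where "c l = (A * transpose_mat X) $$ (i, l)" for l
  have c: "(\<Sum>l<n. (c l)\<^sup>2) = A $$ (i, i)" "\<exists>l<n. c l \<noteq> 0"
    using ls_weights[OF X A i] by (simp_all add: c_def)
  then have a: "A $$ (i, i) > 0" by (metis sum_pos2[of "{..<n}" _ "\<lambda>l. (c l)\<^sup>2"] finite_lessThan
        lessThan_iff zero_le_power2 zero_less_power2)
  define s where "s = \<sigma> * sqrt (A $$ (i, i))"
  have s: "s > 0" using \<sigma> a by (simp add: s_def)
  let ?M = "noise n \<sigma>"
  interpret M: prob_space ?M using prob_space_noise[OF \<sigma>] .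
  define Z where "Z u = (\<Sum>l<n. c l * u l) / s" for u
  have "distributed ?M lborel (\<lambda>u. \<Sum>l<n. c l * u l) (normal_density 0 s)"
    using distributed_noise_lincomb[OF \<sigma> c(2)] by (simp add: c(1) s_def)
  then have "distributed ?M lborel Z std_normal_density"
    using M.normal_standard_normal_convert[OF s] by (simp add: Z_def[abs_def])
  then have Z: "distr ?M lborel Z = std_normal" "Z \<in> measurable ?M lborel"
    unfolding distributed_def by auto
  have "coverage est X n \<sigma> \<eta> d i \<theta> = thr_coverage est s (s * (sqrt (real n) * \<eta>)) d (\<theta> $ i)"
    if \<theta>: "\<theta> \<in> carrier_vec k" for \<theta>
  proof -
    let ?t = "s * (sqrt (real n) * \<eta>)" and ?x = "\<theta> $ i"
    let ?E = "{z. est (?x + s * z) ?t - d * ?t \<le> ?x \<and> ?x \<le> est (?x + s * z) ?t + d * ?t}"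
    have t: "\<sigma> * xi X n i * \<eta> = ?t"
      using xi_eq_sqrt_gram_inverse[OF X rank n A i] by (simp add: s_def real_sqrt_mult)
    then have dt: "\<sigma> * d * xi X n i * \<eta> = d * ?t" by (metis mult.assoc mult.left_commute)
    have b: "ls_est X (X *\<^sub>v \<theta> + Matrix.vec n u) $ i = ?x + s * Z u" for u
      using ls_est_index[OF X A \<theta> i] s by (simp add: Z_def c_def)
    have "coverage est X n \<sigma> \<eta> d i \<theta> = measure ?M (Z -` ?E \<inter> space ?M)"
      unfolding coverage_def Let_def b t dt by (rule arg_cong[where f = "measure ?M"]) auto
    also have "\<dots> = measure (distr ?M lborel Z) ?E"
      using Z(2) thr_coverage_event_borel[OF est] by (intro measure_distr[symmetric]) auto
    finally show ?thesis using Z(1) by (simp add: thr_coverage_def)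
  qed
  with s that show ?thesis by blast
qed

lemma INF_coverage_eq_min_coverage:
  fixes X :: "real mat"
  assumes X: "X \<in> carrier_mat n k" and rank: "vec_space.rank n X = k" and i: "i < k" and n: "n > 0"
    and \<sigma>: "\<sigma> > 0" and est: "thresholding_rule est"
  shows "\<exists>s>0. (INF \<theta>\<in>carrier_vec k. coverage est X n \<sigma> \<eta> d i \<theta>) = min_coverage est s (sqrt (real n) * \<eta>) d"
proof -
  obtain s where s: "s > 0" and cov: "\<And>\<theta>. \<theta> \<in> carrier_vec k \<Longrightarrow>
      coverage est X n \<sigma> \<eta> d i \<theta> = thr_coverage est s (s * (sqrt (real n) * \<eta>)) d (\<theta> $ i)"
    using coverage_eq_thr_coverage[OF X rank i n \<sigma> est] by blast
  have "x \<in> (\<lambda>\<theta>. \<theta> $ i) ` carrier_vec k" for x :: real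
    by (rule image_eqI[where x = "Matrix.vec k (\<lambda>j. if j = i then x else 0)"]) (use i in auto)
  then have "(\<lambda>\<theta> :: real vec. \<theta> $ i) ` carrier_vec k = UNIV" by auto
  moreover have "(INF \<theta>\<in>carrier_vec k. coverage est X n \<sigma> \<eta> d i \<theta>)
      = (INF x\<in>(\<lambda>\<theta>. \<theta> $ i) ` carrier_vec k. thr_coverage est s (s * (sqrt (real n) * \<eta>)) d x)"
    unfolding image_comp by (rule INF_cong) (simp_all add: cov)
  ultimately have "(INF \<theta>\<in>carrier_vec k. coverage est X n \<sigma> \<eta> d i \<theta>) = min_coverage est s (sqrt (real n) * \<eta>) d"
    unfolding min_coverage_def by simp
  with s show ?thesis by blast
qed

lemma tendsto_Phi_mult:
  assumes r: "filterlim r at_top F" and c: "c > 0"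
  shows "((\<lambda>x. Phi (c * r x)) \<longlongrightarrow> 1) F" and "((\<lambda>x. Phi (- (c * r x))) \<longlongrightarrow> 0) F"
proof -
  have cr: "filterlim (\<lambda>x. c * r x) at_top F"
    by (rule filterlim_tendsto_pos_mult_at_top[OF tendsto_const c r])
  then show "((\<lambda>x. Phi (c * r x)) \<longlongrightarrow> 1) F" by (rule filterlim_compose[OF Phi_at_top])
  show "((\<lambda>x. Phi (- (c * r x))) \<longlongrightarrow> 0) F"
    by (rule filterlim_compose[OF Phi_at_bot]) (simp add: filterlim_uminus_at_bot cr)
qed

lemma min_coverage_nonneg: "0 \<le> min_coverage est s r d"
  unfolding min_coverage_def thr_coverage_def by (rule cINF_greatest) auto

lemma min_coverage_le_1: "min_coverage est s r d \<le> 1"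
  unfolding min_coverage_def by (rule cINF_lower2[OF bdd_below_thr_coverage UNIV_I thr_coverage_le_1])

lemma min_coverage_ge_two_sided:
  assumes "thresholding_rule est" "s > 0" "r > 0" "1 < d"
  shows "Phi ((d - 1) * r) - Phi (- ((d - 1) * r)) \<le> min_coverage est s r d"
  unfolding min_coverage_def by (rule cINF_greatest) (auto intro: thr_coverage_ge_two_sided[OF assms])

lemma min_coverage_ge_one_sided:
  assumes "thresholding_rule est" "s > 0" "r > 0" "1 \<le> d"
  shows "min (Phi r - Phi 0) (Phi 0 - Phi (- r)) \<le> min_coverage est s r d"
  unfolding min_coverage_def by (rule cINF_greatest) (auto intro: thr_coverage_ge_one_sided[OF assms])

lemma min_coverage_le:
  assumes "thresholding_rule est" "s > 0" "r > 0" "y < (1 - d) * r"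
  shows "min_coverage est s r d \<le> 1 - Phi y"
  unfolding min_coverage_def by (rule cINF_lower2[OF bdd_below_thr_coverage UNIV_I thr_coverage_le[OF assms]])

lemma tendsto_min_coverage:
  assumes est: "thresholding_rule est" and r: "filterlim r at_top sequentially"
    and s: "\<forall>\<^sub>F n in sequentially. s n > 0"
  shows "(\<lambda>n. min_coverage est (s n) (r n) d) \<longlonglongrightarrow> (if d > 1 then 1 else if d = 1 then 1 / 2 else 0)"
proof -
  let ?G = "\<lambda>n. min_coverage est (s n) (r n) d"
  have "\<forall>\<^sub>F n in sequentially. r n > 0" using r unfolding filterlim_at_top_dense by blast
  with s have pos: "\<forall>\<^sub>F n in sequentially. s n > 0 \<and> r n > 0" by (rule eventually_conj)
  consider "d > 1" | "d = 1" | "d < 1" by linarith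
  then show ?thesis
  proof cases
    case 1
    have "(\<lambda>n. Phi ((d - 1) * r n) - Phi (- ((d - 1) * r n))) \<longlonglongrightarrow> 1 - 0"
      using tendsto_Phi_mult[OF r, of "d - 1"] 1 by (intro tendsto_diff) auto
    moreover have "\<forall>\<^sub>F n in sequentially. Phi ((d - 1) * r n) - Phi (- ((d - 1) * r n)) \<le> ?G n"
      using pos by (rule eventually_mono) (use min_coverage_ge_two_sided[OF est _ _ 1] in blast)
    moreover have "\<forall>\<^sub>F n in sequentially. ?G n \<le> 1"
      by (simp add: min_coverage_le_1)
    ultimately have "?G \<longlonglongrightarrow> 1" using tendsto_sandwich[OF _ _ _ tendsto_const] by fastforce
    then show ?thesis using 1 by simp
  next
    case 2
    have "(\<lambda>n. min (Phi (r n) - Phi 0) (Phi 0 - Phi (- r n))) \<longlonglongrightarrow> min (1 - 1 / 2) (1 / 2 - 0)"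
      using tendsto_Phi_mult[OF r, of 1] unfolding Phi_0 by (intro tendsto_min tendsto_diff tendsto_const) auto
    moreover have "(\<lambda>n. 1 - Phi (- inverse (real (Suc n)))) \<longlonglongrightarrow> 1 - Phi (- 0)"
      by (intro tendsto_diff tendsto_const isCont_tendsto_compose[OF isCont_Phi] tendsto_minus
          LIMSEQ_inverse_real_of_nat)
    moreover have "\<forall>\<^sub>F n in sequentially. min (Phi (r n) - Phi 0) (Phi 0 - Phi (- r n)) \<le> ?G n"
      using pos by (rule eventually_mono) (use min_coverage_ge_one_sided[OF est] 2 in auto)
    moreover have "\<forall>\<^sub>F n in sequentially. ?G n \<le> 1 - Phi (- inverse (real (Suc n)))"
      using pos by (rule eventually_mono) (use min_coverage_le[OF est] 2 in auto)
    ultimately have "?G \<longlonglongrightarrow> 1 / 2" using tendsto_sandwich by (fastforce simp: Phi_0)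
    then show ?thesis using 2 by simp
  next
    case 3
    have "(\<lambda>n. 1 - Phi ((1 - d) / 2 * r n)) \<longlonglongrightarrow> 1 - 1"
      using tendsto_Phi_mult[OF r, of "(1 - d) / 2"] 3 by (intro tendsto_diff tendsto_const) auto
    moreover have "\<forall>\<^sub>F n in sequentially. ?G n \<le> 1 - Phi ((1 - d) / 2 * r n)"
      using pos by (rule eventually_mono) (use min_coverage_le[OF est] 3 in auto)
    moreover have "\<forall>\<^sub>F n in sequentially. 0 \<le> ?G n"
      by (simp add: min_coverage_nonneg)
    ultimately have "?G \<longlonglongrightarrow> 0" using tendsto_sandwich[OF _ _ tendsto_const] by fastforce
    then show ?thesis using 3 by simp
  qed
qed

theorem proposition13:
  fixes X :: "nat \<Rightarrow> real mat" and k :: "nat \<Rightarrow> nat"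
    and \<sigma> :: real and \<eta> :: "nat \<Rightarrow> nat \<Rightarrow> real" and i :: nat and d :: real
    and est :: "real \<Rightarrow> real \<Rightarrow> real"
  assumes model: "\<forall>\<^sub>F n in sequentially.
      X n \<in> carrier_mat n (k n) \<and> k n \<ge> 1 \<and> vec_space.rank n (X n) = k n"
    and standing: "\<And>j. (\<forall>\<^sub>F n in sequentially. j < k n) \<Longrightarrow>
      (\<exists>C. \<forall>n. n \<ge> 1 \<and> X n \<in> carrier_mat n (k n) \<and> vec_space.rank n (X n) = k n \<and> j < k n
              \<longrightarrow> (xi (X n) n j)\<^sup>2 / real n \<le> C)"
    and sigma_pos: "\<sigma> > 0"
    and eta_pos: "\<And>j n. \<eta> j n > 0"
    and i_le_k: "\<forall>\<^sub>F n in sequentially. i < k n"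
    and lim1: "(\<lambda>n. xi (X n) n i * \<eta> i n) \<longlonglongrightarrow> 0"
    and lim2: "filterlim (\<lambda>n. sqrt (real n) * \<eta> i n) at_top sequentially"
    and est: "est \<in> {hard_thr, soft_thr, adapt_soft_thr}"
    and d_nonneg: "d \<ge> 0"
  shows "(\<lambda>n. INF \<theta>\<in>carrier_vec (k n). coverage est (X n) n \<sigma> (\<eta> i n) d i \<theta>)
           \<longlonglongrightarrow> (if d > 1 then 1 else if d = 1 then 1 / 2 else 0)"
proof -
  txt \<open>The minimal coverage depends on \<open>n\<close> only through \<open>sqrt n \<eta>\<close>.\<close>
  let ?F = "\<lambda>n. INF \<theta>\<in>carrier_vec (k n). coverage est (X n) n \<sigma> (\<eta> i n) d i \<theta>"
  let ?r = "\<lambda>n. sqrt (real n) * \<eta> i n"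
  let ?good = "\<lambda>n. X n \<in> carrier_mat n (k n) \<and> vec_space.rank n (X n) = k n \<and> i < k n \<and> n > 0"
  have thr: "thresholding_rule est"
    using est thresholding_rule_hard_thr thresholding_rule_soft_thr thresholding_rule_adapt_soft_thr by blast
  have "\<forall>n. \<exists>s. ?good n \<longrightarrow> s > 0 \<and> ?F n = min_coverage est s (?r n) d"
    using INF_coverage_eq_min_coverage[OF _ _ _ _ sigma_pos thr] by blast
  then obtain s where s: "\<And>n. ?good n \<Longrightarrow> s n > 0 \<and> ?F n = min_coverage est (s n) (?r n) d"
    by metis
  have good: "\<forall>\<^sub>F n in sequentially. ?good n"
    using model i_le_k eventually_gt_at_top[of 0] by eventually_elim auto
  have "(\<lambda>n. min_coverage est (s n) (?r n) d) \<longlonglongrightarrow> (if d > 1 then 1 else if d = 1 then 1 / 2 else 0)"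
    using good s by (intro tendsto_min_coverage[OF thr lim2]) (auto elim: eventually_mono)
  moreover have "\<forall>\<^sub>F n in sequentially. min_coverage est (s n) (?r n) d = ?F n"
    using good s by (auto elim: eventually_mono)
  ultimately show ?thesis by (rule Lim_transform_eventually)
qed

end
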